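(* Let $V:\mathbb{R}^d\to\mathbb{R}$ be of class $\mathcal{C}^4$, let $z=0$ be a stationary point with $V(0)=0$, and choose coordinates in which $\nabla^2V(0)=\operatorname{diag}(0,\lambda_2,\dots,\lambda_d)$, where $\lambda_2\neq0$ (of either sign) and $\lambda_3,\dots,\lambda_d>0$. Then there exists a polynomial change of variables $x=y+g(y)$, where $g$ is a polynomial with terms of degree $2$ and $3$, such that $$V(y+g(y))=\frac12\sum_{i=2}^d\lambda_iy_i^2+C_3y_1^3+C_4y_1^4+o(\|y\|^4),$$ where $C_3=V_{111}$ and $C_4=V_{1111}-\frac12\sum_{j=2}^d\frac{V_{11j}^2}{\lambda_j}$.
   Context: For indices $i_1\le\dots\le i_r$ in $\{1,\dots,d\}$, $V_{i_1\dots i_r}=\frac{1}{n_1!\cdots n_d!}\frac{\partial}{\partial x_{i_1}}\cdots\frac{\partial}{\partial x_{i_r}}V(0)$ with $n_j=\#\{k:i_k=j\}$; thus $V_{111}=\frac16\partial_1^3V(0)$, $V_{1111}=\frac1{24}\partial_1^4V(0)$ and $V_{11j}=\frac12\partial_1^2\partial_jV(0)$ for $j\ge2$. *)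

theory Defs
  imports "HOL-Analysis.Analysis" "HOL-Library.Landau_Symbols"
begin

definition partial :: "'n::finite \<Rightarrow> (real^'n \<Rightarrow> real) \<Rightarrow> real^'n \<Rightarrow> real" where
  "partial i f x = deriv (\<lambda>t. f (x + t *\<^sub>R axis i 1)) 0"

fun C_k :: "nat \<Rightarrow> (real^'n::finite \<Rightarrow> real) \<Rightarrow> bool" where
  "C_k 0 f = continuous_on UNIV f"
| "C_k (Suc k) f = (continuous_on UNIV f \<and>
     (\<forall>i x. (\<lambda>t. f (x + t *\<^sub>R axis i 1)) differentiable (at 0)) \<and>
     (\<forall>i. C_k k (partial i f)))"

definition poly_deg23 :: "(real^'n::finite \<Rightarrow> real^'n) \<Rightarrow> bool" where
  "poly_deg23 g \<longleftrightarrow> (\<exists>(c2 :: 'n \<Rightarrow> 'n \<Rightarrow> 'n \<Rightarrow> real) (c3 :: 'n \<Rightarrow> 'n \<Rightarrow> 'n \<Rightarrow> 'n \<Rightarrow> real).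
     \<forall>y. g y = (\<chi> i. (\<Sum>a\<in>UNIV. \<Sum>b\<in>UNIV. c2 i a b * y$a * y$b)
                    + (\<Sum>a\<in>UNIV. \<Sum>b\<in>UNIV. \<Sum>c\<in>UNIV. c3 i a b c * y$a * y$b * y$c)))"

end

theory Submission
  imports Defs
begin

text \<open>
  Taylor's theorem along rays, with the remainder controlled by the continuity of the fourth
  derivatives, gives \<open>V x = T x + o(\<parallel>x\<parallel>\<^sup>4)\<close> for the Taylor polynomial \<open>T\<close> of degree 4, whose
  quadratic part is \<open>\<Sum>\<^sub>i lam\<^sub>i x\<^sub>i\<^sup>2 / 2\<close>. A homogeneous polynomial \<open>f\<close> of degree \<open>n + 1\<close> splits
  as \<open>f y = f (y\<^sub>k e\<^sub>k) + \<Sum>\<^sub>j\<^sub>\<noteq>\<^sub>k y\<^sub>j Q\<^sub>j y\<close>, and as \<open>lam\<^sub>j \<noteq> 0\<close> for \<open>j \<noteq> k\<close>, the shift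
  \<open>y\<^sub>j \<mapsto> y\<^sub>j - Q\<^sub>j y / lam\<^sub>j\<close> trades the second summand for terms of higher degree.
  A quadratic shift \<open>G2\<close> removes in this way all of the cubic part of \<open>T\<close> but its \<open>y\<^sub>k\<^sup>3\<close>-term,
  then a cubic shift \<open>G3\<close> does the same for the quartic part of \<open>T (y + G2 y)\<close>, so that
  \<open>T (y + G2 y + G3 y)\<close> is the normal form up to \<open>O(\<parallel>y\<parallel>\<^sup>5)\<close>. The coefficient of \<open>y\<^sub>k\<^sup>4\<close> is the value of
  that quartic part at \<open>e\<^sub>k\<close>, where \<open>G2 e\<^sub>k\<close> contributes \<open>-\<Sum>\<^sub>j V\<^sub>1\<^sub>1\<^sub>j\<^sup>2 / (2 lam\<^sub>j)\<close>.
  Since \<open>y + G2 y + G3 y = O(\<parallel>y\<parallel>)\<close>, the Taylor remainder stays \<open>o(\<parallel>y\<parallel>\<^sup>4)\<close>.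
\<close>

section \<open>Partial derivatives of \<open>C\<^sup>k\<close> functions\<close>

lemma C_k_imp_continuous_on: "C_k m f \<Longrightarrow> continuous_on UNIV f"
  by (cases m) auto

lemma C_k_mono:
  assumes "m \<le> n" "C_k n f"
  shows "C_k m f"
  using assms
proof (induction n arbitrary: m f)
  case (Suc n)
  show ?case
  proof (cases m)
    case 0
    then show ?thesis using C_k_imp_continuous_on[OF Suc.prems(2)] by simp
  next
    case (Suc m')
    with Suc.prems have "m' \<le> n" "\<And>i. C_k n (partial i f)" by auto
    then have "C_k m' (partial i f)" for i by (rule Suc.IH)
    with Suc.prems(2) show ?thesis unfolding \<open>m = Suc m'\<close> by simp
  qed
qed simp

lemma has_real_derivative_partial:
  assumes "\<forall>x. (\<lambda>t. f (x + t *\<^sub>R axis i 1)) differentiable (at 0)"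
  shows "((\<lambda>t. f (z + t *\<^sub>R axis i 1)) has_real_derivative partial i f (z + s *\<^sub>R axis i 1)) (at s)"
proof -
  let ?g = "\<lambda>t. f ((z + s *\<^sub>R axis i 1) + t *\<^sub>R axis i 1)"
  have "(?g has_real_derivative partial i f (z + s *\<^sub>R axis i 1)) (at (s + - s))"
    unfolding partial_def using assms DERIV_deriv_iff_real_differentiable by simp
  then have "((\<lambda>t. ?g (t + - s)) has_real_derivative partial i f (z + s *\<^sub>R axis i 1)) (at s)"
    by (rule DERIV_shift[THEN iffD1])
  moreover have "(\<lambda>t. ?g (t + - s)) = (\<lambda>t. f (z + t *\<^sub>R axis i 1))"
    by (auto simp: algebra_simps)
  ultimately show ?thesis by simp
qed

lemma mean_value_from_0:
  fixes \<phi> :: "real \<Rightarrow> real"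
  assumes "\<And>t. (\<phi> has_real_derivative \<phi>' t) (at t)"
  obtains s where "\<bar>s\<bar> \<le> \<bar>a\<bar>" "\<phi> a - \<phi> 0 = \<phi>' s * a"
proof -
  have deriv: "(\<phi> has_derivative (\<lambda>h. \<phi>' t * h)) (at t within S)" for t S
    using assms has_field_derivative_imp_has_derivative has_derivative_at_withinI by blast
  consider "0 \<le> a" | "a \<le> 0" by linarith
  then show ?thesis
  proof cases
    case 1
    then obtain s where "s \<in> {0..a}" "\<phi> a - \<phi> 0 = \<phi>' s * (a - 0)"
      using mvt_very_simple[OF 1 deriv] by blast
    with that[of s] show ?thesis by simp
  next
    case 2
    then obtain s where "s \<in> {a..0}" "\<phi> 0 - \<phi> a = \<phi>' s * (0 - a)"
      using mvt_very_simple[OF 2 deriv] by blast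
    with that[of s] show ?thesis by (simp add: algebra_simps)
  qed
qed

lemma partial_increment_approx:
  fixes f :: "real^'n::finite \<Rightarrow> real"
  assumes dif: "\<forall>x. (\<lambda>t. f (x + t *\<^sub>R axis q 1)) differentiable (at 0)"
    and cont: "continuous (at x) (partial q f)" and "e > 0"
  obtains d where "d > 0"
    "\<And>z c. norm (z - x) + \<bar>c\<bar> < d \<Longrightarrow>
       \<bar>f (z + c *\<^sub>R axis q 1) - f z - partial q f x * c\<bar> \<le> e * \<bar>c\<bar>"
proof -
  obtain d where "d > 0" and near: "\<forall>z. norm (z - x) < d \<longrightarrow> \<bar>partial q f z - partial q f x\<bar> < e"
    using cont \<open>e > 0\<close> unfolding continuous_at_real_range by blast
  have "\<bar>f (z + c *\<^sub>R axis q 1) - f z - partial q f x * c\<bar> \<le> e * \<bar>c\<bar>"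
    if zc: "norm (z - x) + \<bar>c\<bar> < d" for z c
  proof -
    obtain s where s: "\<bar>s\<bar> \<le> \<bar>c\<bar>"
      and mv: "f (z + c *\<^sub>R axis q 1) - f (z + 0 *\<^sub>R axis q 1) = partial q f (z + s *\<^sub>R axis q 1) * c"
      using mean_value_from_0[OF has_real_derivative_partial[OF dif]] by blast
    have "norm (z + s *\<^sub>R axis q 1 - x) \<le> norm (z - x) + norm (s *\<^sub>R axis q (1::real))"
      using norm_triangle_ineq[of "z - x" "s *\<^sub>R axis q 1"] by (simp add: algebra_simps)
    with s zc have "\<bar>partial q f (z + s *\<^sub>R axis q 1) - partial q f x\<bar> \<le> e"
      using near by (simp add: less_imp_le)
    then have "\<bar>partial q f (z + s *\<^sub>R axis q 1) - partial q f x\<bar> * \<bar>c\<bar> \<le> e * \<bar>c\<bar>"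
      by (rule mult_right_mono) simp
    with mv show ?thesis by (simp add: abs_mult flip: left_diff_distrib)
  qed
  with \<open>d > 0\<close> show ?thesis by (rule that)
qed

lemma partials_linear_approx:
  fixes f :: "real^'n::finite \<Rightarrow> real"
  assumes dif: "\<forall>i x. (\<lambda>t. f (x + t *\<^sub>R axis i 1)) differentiable (at 0)"
    and cont: "\<forall>i. continuous_on UNIV (partial i f)"
    and "finite S" "e > 0"
  shows "\<exists>d>0. \<forall>h. (\<forall>p. p \<notin> S \<longrightarrow> h$p = 0) \<and> norm h < d \<longrightarrow>
      \<bar>f (x + h) - f x - (\<Sum>p\<in>S. partial p f x * h$p)\<bar> \<le> e * norm h"
  using \<open>finite S\<close> \<open>e > 0\<close>
proof (induction S arbitrary: e rule: finite_induct)
  case empty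
  have "(\<forall>p. h$p = 0) \<longleftrightarrow> h = 0" for h :: "real^'n" by (simp add: vec_eq_iff)
  then show ?case by (auto intro: exI[of _ 1])
next
  case (insert q S)
  obtain d1 where "d1 > 0" and approx: "\<forall>h. (\<forall>p. p \<notin> S \<longrightarrow> h$p = 0) \<and> norm h < d1 \<longrightarrow>
      \<bar>f (x + h) - f x - (\<Sum>p\<in>S. partial p f x * h$p)\<bar> \<le> e/2 * norm h"
    using insert.IH[of "e/2"] insert.prems by auto
  have "continuous (at x) (partial q f)" using cont continuous_on_eq_continuous_at by blast
  then obtain d2 where "d2 > 0" and step: "\<And>z c. norm (z - x) + \<bar>c\<bar> < d2 \<Longrightarrow>
      \<bar>f (z + c *\<^sub>R axis q 1) - f z - partial q f x * c\<bar> \<le> e/2 * \<bar>c\<bar>"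
    using partial_increment_approx[OF spec[OF dif, of q] _ half_gt_zero[OF insert.prems]] by blast
  show ?case
  proof (intro exI[of _ "min d1 (d2/2)"] conjI allI impI)
    show "min d1 (d2/2) > 0" using \<open>d1 > 0\<close> \<open>d2 > 0\<close> by simp
    fix h :: "real^'n" assume h: "(\<forall>p. p \<notin> insert q S \<longrightarrow> h$p = 0) \<and> norm h < min d1 (d2/2)"
    define h' where "h' = h - (h$q) *\<^sub>R axis q 1"
    have h'_nth: "h'$p = (if p = q then 0 else h$p)" for p by (simp add: h'_def axis_def)
    have norm_h': "norm h' \<le> norm h" by (rule norm_le_componentwise_cart) (simp add: h'_nth)
    have I1: "\<bar>f (x + h') - f x - (\<Sum>p\<in>S. partial p f x * h'$p)\<bar> \<le> e/2 * norm h'"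
      by (rule approx[rule_format]) (use norm_h' h in \<open>auto simp: h'_nth\<close>)
    have "norm (x + h' - x) + \<bar>h$q\<bar> < d2"
      using norm_h' component_le_norm_cart[of h q] h by simp
    from step[OF this] have I2: "\<bar>f (x + h) - f (x + h') - partial q f x * h$q\<bar> \<le> e/2 * \<bar>h$q\<bar>"
      by (simp add: h'_def)
    have "(\<Sum>p\<in>S. partial p f x * h'$p) = (\<Sum>p\<in>S. partial p f x * h$p)"
      using insert.hyps(2) by (intro sum.cong) (auto simp: h'_nth)
    then have "\<bar>f (x + h) - f x - (\<Sum>p\<in>insert q S. partial p f x * h$p)\<bar>
        \<le> \<bar>f (x + h) - f (x + h') - partial q f x * h$q\<bar> + \<bar>f (x + h') - f x - (\<Sum>p\<in>S. partial p f x * h'$p)\<bar>"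
      using insert.hyps by simp
    also have "\<dots> \<le> e/2 * \<bar>h$q\<bar> + e/2 * norm h'"
      using I2 I1 by (rule add_mono)
    also have "\<dots> \<le> e/2 * norm h + e/2 * norm h"
      using norm_h' component_le_norm_cart[of h q] insert.prems
      by (intro add_mono mult_left_mono) auto
    finally show "\<bar>f (x + h) - f x - (\<Sum>p\<in>insert q S. partial p f x * h$p)\<bar> \<le> e * norm h"
      by simp
  qed
qed

lemma has_derivative_sum_partials:
  fixes f :: "real^'n::finite \<Rightarrow> real"
  assumes "C_k 1 f"
  shows "(f has_derivative (\<lambda>h. \<Sum>p\<in>UNIV. partial p f x * h$p)) (at x)"
  unfolding has_derivative_at_alt
proof (intro conjI allI impI)
  show "bounded_linear (\<lambda>h. \<Sum>p\<in>UNIV. partial p f x * h$p)"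
    by (intro bounded_linear_sum bounded_linear_mult_right[THEN bounded_linear_compose]
        bounded_linear_vec_nth)
  fix e :: real assume "e > 0"
  moreover have "\<forall>i x. (\<lambda>t. f (x + t *\<^sub>R axis i 1)) differentiable (at 0)"
    and "\<forall>i. continuous_on UNIV (partial i f)"
    using assms by (auto intro: C_k_imp_continuous_on)
  ultimately obtain d where "d > 0" and approx: "\<forall>h. norm h < d \<longrightarrow>
      \<bar>f (x + h) - f x - (\<Sum>p\<in>UNIV. partial p f x * h$p)\<bar> \<le> e * norm h"
    using partials_linear_approx[of f UNIV e x] by auto
  show "\<exists>d>0. \<forall>y. norm (y - x) < d \<longrightarrow>
      norm (f y - f x - (\<Sum>p\<in>UNIV. partial p f x * (y - x)$p)) \<le> e * norm (y - x)"
    using approx[rule_format, of "y - x" for y] \<open>d > 0\<close> by (intro exI[of _ d]) auto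
qed

lemma has_real_derivative_along_ray:
  fixes F :: "real^'n::finite \<Rightarrow> real"
  assumes "C_k 1 F"
  shows "((\<lambda>t. F (t *\<^sub>R y)) has_real_derivative (\<Sum>r\<in>UNIV. partial r F (t *\<^sub>R y) * y$r)) (at t)"
proof -
  have "((\<lambda>t. F (t *\<^sub>R y)) has_derivative
      (\<lambda>s. \<Sum>p\<in>UNIV. partial p F (t *\<^sub>R y) * (s *\<^sub>R y)$p)) (at t)"
  proof -
    have "((\<lambda>t. t *\<^sub>R y) has_derivative (\<lambda>s. s *\<^sub>R y)) (at t)"
      by (intro derivative_eq_intros) auto
    from has_derivative_compose[OF this has_derivative_sum_partials[OF assms]]
    show ?thesis by (simp add: o_def)
  qed
  moreover have "(\<lambda>s. \<Sum>p\<in>UNIV. partial p F (t *\<^sub>R y) * (s *\<^sub>R y)$p)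
      = (*) (\<Sum>r\<in>UNIV. partial r F (t *\<^sub>R y) * y$r)"
    by (auto simp: fun_eq_iff sum_distrib_left algebra_simps)
  ultimately show ?thesis unfolding has_field_derivative_def by simp
qed

lemma second_difference_mean_value:
  fixes f :: "real^'n::finite \<Rightarrow> real"
  assumes "C_k 2 f"
  obtains \<xi> where "norm (\<xi> - a) \<le> 2 * \<bar>t\<bar>"
    "f (a + t *\<^sub>R axis j 1 + t *\<^sub>R axis i 1) - f (a + t *\<^sub>R axis i 1) - f (a + t *\<^sub>R axis j 1) + f a
     = t * t * partial j (partial i f) \<xi>"
proof -
  have dif: "\<forall>x. (\<lambda>t. f (x + t *\<^sub>R axis i 1)) differentiable (at 0)"
    and dif': "\<forall>x. (\<lambda>t. partial i f (x + t *\<^sub>R axis j 1)) differentiable (at 0)"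
    using assms by (auto simp: numeral_2_eq_2)
  have "((\<lambda>s. f ((a + t *\<^sub>R axis j 1) + s *\<^sub>R axis i 1) - f (a + s *\<^sub>R axis i 1)) has_real_derivative
     partial i f ((a + t *\<^sub>R axis j 1) + s *\<^sub>R axis i 1) - partial i f (a + s *\<^sub>R axis i 1)) (at s)" for s
    by (intro DERIV_diff has_real_derivative_partial dif)
  from mean_value_from_0[OF this, where a = t] obtain \<sigma> where \<sigma>: "\<bar>\<sigma>\<bar> \<le> \<bar>t\<bar>"
    and mv1: "f (a + t *\<^sub>R axis j 1 + t *\<^sub>R axis i 1) - f (a + t *\<^sub>R axis i 1) - (f (a + t *\<^sub>R axis j 1) - f a)
       = (partial i f ((a + \<sigma> *\<^sub>R axis i 1) + t *\<^sub>R axis j 1) - partial i f (a + \<sigma> *\<^sub>R axis i 1)) * t"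
    by (auto simp: algebra_simps)
  from mean_value_from_0[OF has_real_derivative_partial[OF dif', where z = "a + \<sigma> *\<^sub>R axis i 1"], where a = t]
  obtain \<rho> where \<rho>: "\<bar>\<rho>\<bar> \<le> \<bar>t\<bar>"
    and mv2: "partial i f ((a + \<sigma> *\<^sub>R axis i 1) + t *\<^sub>R axis j 1) - partial i f (a + \<sigma> *\<^sub>R axis i 1)
       = partial j (partial i f) ((a + \<sigma> *\<^sub>R axis i 1) + \<rho> *\<^sub>R axis j 1) * t"
    by auto
  have "norm ((a + \<sigma> *\<^sub>R axis i 1 + \<rho> *\<^sub>R axis j 1) - a) = norm (\<sigma> *\<^sub>R axis i (1::real) + \<rho> *\<^sub>R axis j 1)"
    by (simp add: algebra_simps)
  also have "\<dots> \<le> norm (\<sigma> *\<^sub>R axis i (1::real)) + norm (\<rho> *\<^sub>R axis j (1::real))"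
    by (rule norm_triangle_ineq)
  also have "\<dots> \<le> 2 * \<bar>t\<bar>" using \<sigma> \<rho> by simp
  finally show ?thesis
    using mv1 mv2 by (intro that[of "a + \<sigma> *\<^sub>R axis i 1 + \<rho> *\<^sub>R axis j 1"]) (auto simp: algebra_simps)
qed

lemma second_difference_quotient_tendsto:
  fixes f :: "real^'n::finite \<Rightarrow> real"
  assumes "C_k 2 f"
  shows "((\<lambda>t. (f (a + t *\<^sub>R axis j 1 + t *\<^sub>R axis i 1) - f (a + t *\<^sub>R axis i 1) - f (a + t *\<^sub>R axis j 1) + f a)
      / (t * t)) \<longlongrightarrow> partial j (partial i f) a) (at 0)"
  unfolding LIM_eq
proof (intro allI impI)
  fix r :: real assume "r > 0"
  have "continuous_on UNIV (partial j (partial i f))"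
    using assms by (auto simp: numeral_2_eq_2 dest: C_k_imp_continuous_on)
  then have "continuous (at a) (partial j (partial i f))"
    using continuous_on_eq_continuous_at by blast
  with \<open>r > 0\<close> obtain d where "d > 0"
    and near: "\<forall>z. norm (z - a) < d \<longrightarrow> \<bar>partial j (partial i f) z - partial j (partial i f) a\<bar> < r"
    unfolding continuous_at_real_range by blast
  show "\<exists>s>0. \<forall>t. t \<noteq> 0 \<and> norm (t - 0) < s \<longrightarrow>
      norm ((f (a + t *\<^sub>R axis j 1 + t *\<^sub>R axis i 1) - f (a + t *\<^sub>R axis i 1) - f (a + t *\<^sub>R axis j 1) + f a)
        / (t * t) - partial j (partial i f) a) < r"
  proof (intro exI[of _ "d/2"] conjI allI impI)
    fix t :: real assume t: "t \<noteq> 0 \<and> norm (t - 0) < d/2"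
    obtain \<xi> where "norm (\<xi> - a) \<le> 2 * \<bar>t\<bar>"
      and E: "f (a + t *\<^sub>R axis j 1 + t *\<^sub>R axis i 1) - f (a + t *\<^sub>R axis i 1) - f (a + t *\<^sub>R axis j 1) + f a
       = t * t * partial j (partial i f) \<xi>"
      using second_difference_mean_value[OF assms] by blast
    with t near show "norm ((f (a + t *\<^sub>R axis j 1 + t *\<^sub>R axis i 1) - f (a + t *\<^sub>R axis i 1)
        - f (a + t *\<^sub>R axis j 1) + f a) / (t * t) - partial j (partial i f) a) < r"
      by (simp add: E)
  qed (use \<open>d > 0\<close> in simp)
qed

lemma partial_commute:
  fixes f :: "real^'n::finite \<Rightarrow> real"
  assumes "C_k 2 f"
  shows "partial i (partial j f) a = partial j (partial i f) a"
proof -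
  have "a + t *\<^sub>R axis i 1 + t *\<^sub>R axis j 1 = a + t *\<^sub>R axis j 1 + t *\<^sub>R axis i (1::real)" for t
    by (simp add: algebra_simps)
  then have "((\<lambda>t. (f (a + t *\<^sub>R axis j 1 + t *\<^sub>R axis i 1) - f (a + t *\<^sub>R axis i 1) - f (a + t *\<^sub>R axis j 1) + f a)
      / (t * t)) \<longlongrightarrow> partial i (partial j f) a) (at 0)"
    using second_difference_quotient_tendsto[OF assms, of a i j] by (simp add: algebra_simps)
  with second_difference_quotient_tendsto[OF assms, of a j i] show ?thesis
    using tendsto_unique[OF at_neq_bot] by blast
qed

section \<open>Taylor expansion along rays\<close>

text \<open>\<open>iterated_dir_deriv x m F z\<close> is the \<open>m\<close>-th derivative \<open>D\<^sup>mF(z)[x,\<dots>,x]\<close>.\<close>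

fun iterated_dir_deriv :: "real^'n::finite \<Rightarrow> nat \<Rightarrow> (real^'n \<Rightarrow> real) \<Rightarrow> real^'n \<Rightarrow> real" where
  "iterated_dir_deriv x 0 F = F"
| "iterated_dir_deriv x (Suc m) F = (\<lambda>z. \<Sum>p\<in>UNIV. iterated_dir_deriv x m (partial p F) z * x$p)"

lemma has_real_derivative_iterated_dir_deriv:
  "C_k (Suc m) F \<Longrightarrow> ((\<lambda>t. iterated_dir_deriv x m F (t *\<^sub>R x)) has_real_derivative
      iterated_dir_deriv x (Suc m) F (t *\<^sub>R x)) (at t)"
proof (induction m arbitrary: F)
  case 0
  then show ?case using has_real_derivative_along_ray[of F x t] by simp
next
  case (Suc m)
  then have "\<And>p. C_k (Suc m) (partial p F)" by simp
  then have "((\<lambda>t. \<Sum>p\<in>UNIV. iterated_dir_deriv x m (partial p F) (t *\<^sub>R x) * x$p) has_real_derivative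
      (\<Sum>p\<in>UNIV. iterated_dir_deriv x (Suc m) (partial p F) (t *\<^sub>R x) * x$p)) (at t)"
    by (intro DERIV_sum DERIV_cmult_right Suc.IH)
  then show ?case by simp
qed

lemma iterated_dir_deriv_near_0:
  assumes "C_k m F" "e > 0"
  shows "\<exists>d>0. \<forall>x z. norm z < d \<longrightarrow>
           \<bar>iterated_dir_deriv x m F z - iterated_dir_deriv x m F 0\<bar> \<le> e * norm x ^ m"
  using assms
proof (induction m arbitrary: F e)
  case 0
  then have "continuous (at 0) F" using C_k_imp_continuous_on continuous_on_eq_continuous_at by blast
  with \<open>e > 0\<close> show ?case unfolding continuous_at_real_range by (force intro: less_imp_le)
next
  case (Suc m)
  define e' where "e' = e / real CARD('a)"
  have "e' > 0" using Suc.prems by (simp add: e'_def)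
  then have "\<forall>p. \<exists>d>0. \<forall>x z. norm z < d \<longrightarrow>
      \<bar>iterated_dir_deriv x m (partial p F) z - iterated_dir_deriv x m (partial p F) 0\<bar> \<le> e' * norm x ^ m"
    using Suc.IH Suc.prems by simp
  then obtain D where D: "\<And>p. D p > 0" and near: "\<And>p x z. norm z < D p \<Longrightarrow>
      \<bar>iterated_dir_deriv x m (partial p F) z - iterated_dir_deriv x m (partial p F) 0\<bar> \<le> e' * norm x ^ m"
    by metis
  show ?case
  proof (intro exI[of _ "Min (range D)"] conjI allI impI)
    show "Min (range D) > 0" using D by simp
    fix x z :: "real^'a" assume z: "norm z < Min (range D)"
    have "\<bar>iterated_dir_deriv x (Suc m) F z - iterated_dir_deriv x (Suc m) F 0\<bar>
        = \<bar>\<Sum>p\<in>UNIV. (iterated_dir_deriv x m (partial p F) z - iterated_dir_deriv x m (partial p F) 0) * x$p\<bar>"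
      by (simp add: sum_subtractf left_diff_distrib)
    also have "\<dots> \<le> (\<Sum>p\<in>UNIV. \<bar>(iterated_dir_deriv x m (partial p F) z - iterated_dir_deriv x m (partial p F) 0) * x$p\<bar>)"
      by (rule sum_abs)
    also have "\<dots> \<le> (\<Sum>p\<in>(UNIV::'a set). e' * norm x ^ m * norm x)"
    proof (rule sum_mono)
      fix p :: 'a
      have "norm z < D p" using z by simp
      then show "\<bar>(iterated_dir_deriv x m (partial p F) z - iterated_dir_deriv x m (partial p F) 0) * x$p\<bar> \<le> e' * norm x ^ m * norm x"
        unfolding abs_mult using near[of z p x] component_le_norm_cart[of x p] \<open>e' > 0\<close>
        by (intro mult_mono) auto
    qed
    also have "\<dots> = e * norm x ^ Suc m" by (simp add: e'_def)
    finally show "\<bar>iterated_dir_deriv x (Suc m) F z - iterated_dir_deriv x (Suc m) F 0\<bar> \<le> e * norm x ^ Suc m" .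
  qed
qed

lemma taylor_lagrange_along_ray:
  assumes "C_k n V"
  obtains t where "0 \<le> t" "t \<le> 1"
    "V x = (\<Sum>m<n. iterated_dir_deriv x m V 0 / fact m) + iterated_dir_deriv x n V (t *\<^sub>R x) / fact n"
proof (cases "n = 0")
  case True
  then show ?thesis using that[of 1] by simp
next
  case False
  have "\<exists>t. 0 < t \<and> t < 1 \<and> V (1 *\<^sub>R x) = (\<Sum>m<n. iterated_dir_deriv x m V (0 *\<^sub>R x) / fact m * 1 ^ m)
     + iterated_dir_deriv x n V (t *\<^sub>R x) / fact n * 1 ^ n"
  proof (rule Maclaurin[where diff = "\<lambda>m t. iterated_dir_deriv x m V (t *\<^sub>R x)"])
    show "\<forall>m t. m < n \<and> 0 \<le> t \<and> t \<le> 1 \<longrightarrow> ((\<lambda>t. iterated_dir_deriv x m V (t *\<^sub>R x))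
        has_real_derivative iterated_dir_deriv x (Suc m) V (t *\<^sub>R x)) (at t)"
      using has_real_derivative_iterated_dir_deriv C_k_mono[OF _ assms] by (metis Suc_leI)
  qed (use False in auto)
  then obtain t where "0 < t" "t < 1"
    "V x = (\<Sum>m<n. iterated_dir_deriv x m V 0 / fact m) + iterated_dir_deriv x n V (t *\<^sub>R x) / fact n"
    by auto
  then show ?thesis by (intro that[of t]) auto
qed

lemma taylor_smallo:
  assumes "C_k n V"
  shows "(\<lambda>x. V x - (\<Sum>m\<le>n. iterated_dir_deriv x m V 0 / fact m)) \<in> o[nhds 0](\<lambda>x. norm x ^ n)"
proof (rule landau_o.smallI)
  fix c :: real assume "c > 0"
  then obtain d where "d > 0" and near: "\<forall>x z. norm z < d \<longrightarrow>
      \<bar>iterated_dir_deriv x n V z - iterated_dir_deriv x n V 0\<bar> \<le> (c * fact n) * norm x ^ n"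
    using iterated_dir_deriv_near_0[OF assms, of "c * fact n"] by auto
  have "norm (V x - (\<Sum>m\<le>n. iterated_dir_deriv x m V 0 / fact m)) \<le> c * norm (norm x ^ n)"
    if "norm x < d" for x
  proof -
    obtain t where t: "0 \<le> t" "t \<le> 1"
      and V: "V x = (\<Sum>m<n. iterated_dir_deriv x m V 0 / fact m) + iterated_dir_deriv x n V (t *\<^sub>R x) / fact n"
      using taylor_lagrange_along_ray[OF assms] by blast
    have "t * norm x \<le> norm x" using t by (simp add: mult_left_le_one_le)
    then have "norm (t *\<^sub>R x) < d" using t that by simp
    then have bound: "\<bar>iterated_dir_deriv x n V (t *\<^sub>R x) - iterated_dir_deriv x n V 0\<bar> \<le> c * fact n * norm x ^ n"
      using near by blast
    have "V x - (\<Sum>m\<le>n. iterated_dir_deriv x m V 0 / fact m)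
        = (iterated_dir_deriv x n V (t *\<^sub>R x) - iterated_dir_deriv x n V 0) / fact n"
      by (simp add: V lessThan_Suc_atMost[symmetric] diff_divide_distrib)
    then have "norm (V x - (\<Sum>m\<le>n. iterated_dir_deriv x m V 0 / fact m))
        = \<bar>iterated_dir_deriv x n V (t *\<^sub>R x) - iterated_dir_deriv x n V 0\<bar> / fact n"
      by simp
    also have "\<dots> \<le> c * fact n * norm x ^ n / fact n"
      by (rule divide_right_mono[OF bound]) simp
    finally show ?thesis by simp
  qed
  then show "\<forall>\<^sub>F x in nhds 0. norm (V x - (\<Sum>m\<le>n. iterated_dir_deriv x m V 0 / fact m)) \<le> c * norm (norm x ^ n)"
    unfolding eventually_nhds_metric using \<open>d > 0\<close> by (auto simp: dist_norm)
qed

lemma bigo_divide_const: "f \<in> O[F](g) \<Longrightarrow> (\<lambda>x. f x / c) \<in> O[F](g)"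
  by (cases "c = 0") simp_all

lemma bigo_norm_add:
  fixes a b :: "'x \<Rightarrow> 'v::real_normed_vector"
  assumes "(\<lambda>y. norm (a y)) \<in> O[F](f)" "(\<lambda>y. norm (b y)) \<in> O[F](f)"
  shows "(\<lambda>y. norm (a y + b y)) \<in> O[F](f)"
proof -
  have "(\<lambda>y. norm (a y + b y)) \<in> O[F](\<lambda>y. norm (a y) + norm (b y))"
    by (intro bigoI[of _ 1] always_eventually allI) (simp add: norm_triangle_ineq)
  moreover have "(\<lambda>y. norm (a y) + norm (b y)) \<in> O[F](f)"
    using assms by (rule sum_in_bigo(1))
  ultimately show ?thesis by (rule landau_o.big_trans)
qed

lemma smallo_compose_at_0:
  fixes f :: "'a::real_normed_vector \<Rightarrow> real" and h :: "'b::real_normed_vector \<Rightarrow> 'a"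
  assumes f: "f \<in> o[nhds 0](\<lambda>x. norm x ^ n)" and h: "(\<lambda>y. norm (h y)) \<in> O[at 0](\<lambda>y. norm y)"
  shows "(\<lambda>y. f (h y)) \<in> o[at 0](\<lambda>y. norm y ^ n)"
proof -
  obtain c where "c > 0" and "\<forall>\<^sub>F y in at 0. norm (h y) \<le> c * norm y"
    using h by (auto elim!: landau_o.bigE)
  moreover have "((\<lambda>y. c * norm y) \<longlongrightarrow> 0) (at (0::'b))"
    by (intro tendsto_mult_right_zero tendsto_norm_zero tendsto_ident_at)
  ultimately have "filterlim h (nhds 0) (at 0)"
    by (auto intro: Lim_null_comparison)
  from landau_o.small.compose[OF f this] have "(\<lambda>y. f (h y)) \<in> o[at 0](\<lambda>y. norm (h y) ^ n)" .
  moreover have "(\<lambda>y. norm (h y) ^ n) \<in> O[at 0](\<lambda>y. norm y ^ n)"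
    using h by (rule landau_o.big_power)
  ultimately show ?thesis by (rule landau_o.small_big_trans)
qed

lemma norm_pow_bigo_at_0:
  assumes "m \<le> n"
  shows "(\<lambda>y::'a::real_normed_vector. norm y ^ n) \<in> O[at 0](\<lambda>y. norm y ^ m)"
proof (intro bigoI[of _ 1])
  have "\<forall>\<^sub>F y in at (0::'a). norm y < 1"
    by (auto simp: eventually_at dist_norm intro: exI[of _ 1])
  then show "\<forall>\<^sub>F y in at (0::'a). norm (norm y ^ n) \<le> 1 * norm (norm y ^ m)"
    by eventually_elim (simp add: power_decreasing assms)
qed

lemma norm_pow_smallo_at_0:
  assumes "m < n"
  shows "(\<lambda>y::'a::real_normed_vector. norm y ^ n) \<in> o[at 0](\<lambda>y. norm y ^ m)"
proof (rule landau_o.smallI)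
  fix c :: real assume "c > 0"
  then have "\<forall>\<^sub>F y in at (0::'a). norm y < min 1 c"
    by (auto simp: eventually_at dist_norm intro: exI[of _ "min 1 c"])
  then show "\<forall>\<^sub>F y in at (0::'a). norm (norm y ^ n) \<le> c * norm (norm y ^ m)"
  proof eventually_elim
    case (elim y)
    have "norm y ^ n = norm y ^ (n - m) * norm y ^ m"
      using assms by (simp flip: power_add)
    also have "\<dots> \<le> c * norm y ^ m"
    proof (rule mult_right_mono)
      have "norm y ^ (n - m) \<le> norm y ^ 1"
        using elim assms by (intro power_decreasing) auto
      then show "norm y ^ (n - m) \<le> c" using elim by simp
    qed simp
    finally show ?case by simp
  qed
qed

section \<open>Homogeneous polynomials\<close>

inductive homogeneous_poly :: "nat \<Rightarrow> (real^'n::finite \<Rightarrow> real) \<Rightarrow> bool" where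
  const: "homogeneous_poly 0 (\<lambda>_. c)"
| add: "homogeneous_poly n f \<Longrightarrow> homogeneous_poly n g \<Longrightarrow> homogeneous_poly n (\<lambda>y. f y + g y)"
| coord_mult: "homogeneous_poly n f \<Longrightarrow> homogeneous_poly (Suc n) (\<lambda>y. y$i * f y)"

definition homogeneous_poly_map :: "nat \<Rightarrow> (real^'n::finite \<Rightarrow> real^'m::finite) \<Rightarrow> bool" where
  "homogeneous_poly_map n G \<longleftrightarrow> (\<forall>r. homogeneous_poly n (\<lambda>y. G y $ r))"

lemma homogeneous_poly_zero: "homogeneous_poly n (\<lambda>_. 0)"
proof (induction n)
  case 0
  show ?case by (rule homogeneous_poly.const)
next
  case (Suc n)
  from homogeneous_poly.coord_mult[OF this] show ?case by simp
qed

lemma homogeneous_poly_coord: "homogeneous_poly 1 (\<lambda>y. y$i)"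
  using homogeneous_poly.coord_mult[OF homogeneous_poly.const[of 1]] by simp

lemma homogeneous_poly_scale: "homogeneous_poly n f \<Longrightarrow> homogeneous_poly n (\<lambda>y. c * f y)"
proof (induction rule: homogeneous_poly.induct)
  case (add n f g)
  then show ?case using homogeneous_poly.add by (simp add: distrib_left)
next
  case (coord_mult n f i)
  from homogeneous_poly.coord_mult[OF coord_mult.IH, of i] show ?case
    by (simp add: mult.left_commute)
qed (rule homogeneous_poly.const)

lemma homogeneous_poly_divide: "homogeneous_poly n f \<Longrightarrow> homogeneous_poly n (\<lambda>y. f y / c)"
  using homogeneous_poly_scale[of n f "1 / c"] by simp

lemma homogeneous_poly_mult:
  assumes "homogeneous_poly m f" "homogeneous_poly n g"
  shows "homogeneous_poly (m + n) (\<lambda>y. f y * g y)"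
  using assms(1)
proof (induction rule: homogeneous_poly.induct)
  case (const c)
  then show ?case using homogeneous_poly_scale[OF assms(2)] by simp
next
  case (add m f1 f2)
  then show ?case using homogeneous_poly.add by (simp add: distrib_right)
next
  case (coord_mult m f i)
  then show ?case using homogeneous_poly.coord_mult by (simp add: mult.assoc)
qed

lemma homogeneous_poly_sum:
  "(\<And>a. a \<in> A \<Longrightarrow> homogeneous_poly n (f a)) \<Longrightarrow> homogeneous_poly n (\<lambda>y. \<Sum>a\<in>A. f a y)"
  by (induction A rule: infinite_finite_induct)
    (auto intro: homogeneous_poly_zero homogeneous_poly.add)

lemma homogeneous_poly_scaleR:
  "homogeneous_poly n f \<Longrightarrow> f (c *\<^sub>R y) = c ^ n * f y"
  by (induction rule: homogeneous_poly.induct) (auto simp: algebra_simps)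

lemma homogeneous_poly_bigo:
  "homogeneous_poly n f \<Longrightarrow> f \<in> O[F](\<lambda>y. norm y ^ n)"
proof (induction rule: homogeneous_poly.induct)
  case (const c)
  then show ?case by (cases "c = 0") simp_all
next
  case (add n f g)
  from add.IH show ?case by (rule sum_in_bigo(1))
next
  case (coord_mult n f i)
  have "(\<lambda>y. y$i) \<in> O[F](\<lambda>y. norm y)"
    by (intro bigoI[of _ 1]) (simp add: component_le_norm_cart)
  from landau_o.big.mult[OF this coord_mult.IH] show ?case by simp
qed

lemma homogeneous_poly_map_bigo:
  assumes "homogeneous_poly_map n G"
  shows "(\<lambda>y. norm (G y)) \<in> O[F](\<lambda>y. norm y ^ n)"
proof -
  have "(\<lambda>y. \<Sum>r\<in>UNIV. \<bar>G y $ r\<bar>) \<in> O[F](\<lambda>y. norm y ^ n)"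
    using assms unfolding homogeneous_poly_map_def
    by (intro big_sum_in_bigo) (simp add: homogeneous_poly_bigo)
  moreover have "(\<lambda>y. norm (G y)) \<in> O[F](\<lambda>y. \<Sum>r\<in>UNIV. \<bar>G y $ r\<bar>)"
    by (intro bigoI[of _ 1]) (simp add: norm_le_l1_cart)
  ultimately show ?thesis using landau_o.big_trans by blast
qed

lemma homogeneous_poly_0_const:
  fixes f :: "real^'n::finite \<Rightarrow> real"
  shows "homogeneous_poly 0 f \<Longrightarrow> f y = f 0"
proof -
  have "homogeneous_poly m f \<Longrightarrow> m = 0 \<Longrightarrow> f y = f 0" for m and f :: "real^'n \<Rightarrow> real"
    by (induction rule: homogeneous_poly.induct) auto
  then show "homogeneous_poly 0 f \<Longrightarrow> f y = f 0" by blast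
qed

lemma homogeneous_poly_Suc_decompose:
  fixes f :: "real^'n::finite \<Rightarrow> real"
  assumes "homogeneous_poly (Suc n) f"
  obtains F where "\<And>a. homogeneous_poly n (F a)" "\<And>y. f y = (\<Sum>a\<in>UNIV. y$a * F a y)"
proof -
  have "\<exists>F. (\<forall>a. homogeneous_poly (m - 1) (F a)) \<and> (\<forall>y. f y = (\<Sum>a\<in>UNIV. y$a * F a y))"
    if "homogeneous_poly m f" "m > 0" for m and f :: "real^'n \<Rightarrow> real"
    using that
  proof (induction rule: homogeneous_poly.induct)
    case (add m f g)
    then obtain F G where "\<forall>a. homogeneous_poly (m - 1) (F a)" "\<forall>y. f y = (\<Sum>a\<in>UNIV. y$a * F a y)"
      "\<forall>a. homogeneous_poly (m - 1) (G a)" "\<forall>y. g y = (\<Sum>a\<in>UNIV. y$a * G a y)"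
      by blast
    then show ?case
      by (intro exI[of _ "\<lambda>a y. F a y + G a y"])
        (simp add: homogeneous_poly.add distrib_left sum.distrib)
  next
    case (coord_mult m f i)
    have "homogeneous_poly m (\<lambda>y. if a = i then f y else 0)" for a
      using coord_mult.hyps by (cases "a = i") (simp_all add: homogeneous_poly_zero)
    then show ?case
      by (intro exI[of _ "\<lambda>a y. if a = i then f y else 0"]) (simp add: if_distrib cong: if_cong)
  qed simp
  from this[OF assms] that show ?thesis by auto
qed

lemma homogeneous_poly_1_coeffs:
  fixes f :: "real^'n::finite \<Rightarrow> real"
  assumes "homogeneous_poly 1 f"
  shows "\<exists>c. \<forall>y. f y = (\<Sum>a\<in>UNIV. c a * y$a)"
proof -
  from assms obtain F where "\<And>a. homogeneous_poly 0 (F a)" "\<And>y. f y = (\<Sum>a\<in>UNIV. y$a * F a y)"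
    using homogeneous_poly_Suc_decompose[of 0 f] by auto
  then have "f y = (\<Sum>a\<in>UNIV. F a 0 * y$a)" for y
    by (simp add: homogeneous_poly_0_const[of "F _" y] mult.commute)
  then show ?thesis by (intro exI[of _ "\<lambda>a. F a 0"]) blast
qed

lemma homogeneous_poly_2_coeffs:
  fixes f :: "real^'n::finite \<Rightarrow> real"
  assumes "homogeneous_poly 2 f"
  shows "\<exists>c. \<forall>y. f y = (\<Sum>a\<in>UNIV. \<Sum>b\<in>UNIV. c a b * y$a * y$b)"
proof -
  from assms obtain F where "\<And>a. homogeneous_poly 1 (F a)" and f: "\<And>y. f y = (\<Sum>a\<in>UNIV. y$a * F a y)"
    using homogeneous_poly_Suc_decompose[of 1 f] by (auto simp: numeral_2_eq_2)
  then have "\<forall>a. \<exists>c. \<forall>y. F a y = (\<Sum>b\<in>UNIV. c b * y$b)"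
    using homogeneous_poly_1_coeffs by blast
  from choice[OF this] obtain c where "\<forall>a y. F a y = (\<Sum>b\<in>UNIV. c a b * y$b)"
    by blast
  with f have "f y = (\<Sum>a\<in>UNIV. \<Sum>b\<in>UNIV. c a b * y$a * y$b)" for y
    by (simp add: sum_distrib_left mult_ac)
  then show ?thesis by blast
qed

lemma homogeneous_poly_3_coeffs:
  fixes f :: "real^'n::finite \<Rightarrow> real"
  assumes "homogeneous_poly 3 f"
  shows "\<exists>c. \<forall>y. f y = (\<Sum>a\<in>UNIV. \<Sum>b\<in>UNIV. \<Sum>d\<in>UNIV. c a b d * y$a * y$b * y$d)"
proof -
  from assms obtain F where "\<And>a. homogeneous_poly 2 (F a)" and f: "\<And>y. f y = (\<Sum>a\<in>UNIV. y$a * F a y)"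
    using homogeneous_poly_Suc_decompose[of 2 f] by (auto simp: numeral_3_eq_3 numeral_2_eq_2)
  then have "\<forall>a. \<exists>c. \<forall>y. F a y = (\<Sum>b\<in>UNIV. \<Sum>d\<in>UNIV. c b d * y$b * y$d)"
    using homogeneous_poly_2_coeffs by blast
  from choice[OF this] obtain c where "\<forall>a y. F a y = (\<Sum>b\<in>UNIV. \<Sum>d\<in>UNIV. c a b d * y$b * y$d)"
    by blast
  with f have "f y = (\<Sum>a\<in>UNIV. \<Sum>b\<in>UNIV. \<Sum>d\<in>UNIV. c a b d * y$a * y$b * y$d)" for y
    by (simp add: sum_distrib_left mult_ac)
  then show ?thesis by blast
qed

lemma homogeneous_poly_linear: "homogeneous_poly 1 (\<lambda>y. \<Sum>a\<in>UNIV. c a * y$a)"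
  using homogeneous_poly_mult[OF homogeneous_poly.const homogeneous_poly_coord]
  by (intro homogeneous_poly_sum) simp

lemma homogeneous_poly_quadratic: "homogeneous_poly 2 (\<lambda>y. \<Sum>a\<in>UNIV. \<Sum>b\<in>UNIV. c a b * y$a * y$b)"
  using homogeneous_poly_mult[OF homogeneous_poly_mult[OF homogeneous_poly.const homogeneous_poly_coord]
      homogeneous_poly_coord]
  by (intro homogeneous_poly_sum) (simp add: numeral_2_eq_2)

lemma homogeneous_poly_cubic:
  "homogeneous_poly 3 (\<lambda>y. \<Sum>a\<in>UNIV. \<Sum>b\<in>UNIV. \<Sum>d\<in>UNIV. c a b d * y$a * y$b * y$d)"
  using homogeneous_poly_mult[OF homogeneous_poly_mult[OF homogeneous_poly_mult[OF
      homogeneous_poly.const homogeneous_poly_coord] homogeneous_poly_coord] homogeneous_poly_coord]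
  by (intro homogeneous_poly_sum) (simp add: numeral_3_eq_3)

lemma poly_deg23_iff:
  "poly_deg23 g \<longleftrightarrow>
     (\<exists>G2 G3. homogeneous_poly_map 2 G2 \<and> homogeneous_poly_map 3 G3 \<and> (\<forall>y. g y = G2 y + G3 y))"
proof
  assume "poly_deg23 g"
  then obtain c2 c3 where g: "\<And>y. g y = (\<chi> i. (\<Sum>a\<in>UNIV. \<Sum>b\<in>UNIV. c2 i a b * y$a * y$b)
      + (\<Sum>a\<in>UNIV. \<Sum>b\<in>UNIV. \<Sum>c\<in>UNIV. c3 i a b c * y$a * y$b * y$c))"
    unfolding poly_deg23_def by blast
  have "homogeneous_poly_map 2 (\<lambda>y. \<chi> i. \<Sum>a\<in>UNIV. \<Sum>b\<in>UNIV. c2 i a b * y$a * y$b)"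
    "homogeneous_poly_map 3 (\<lambda>y. \<chi> i. \<Sum>a\<in>UNIV. \<Sum>b\<in>UNIV. \<Sum>c\<in>UNIV. c3 i a b c * y$a * y$b * y$c)"
    by (simp_all add: homogeneous_poly_map_def homogeneous_poly_quadratic homogeneous_poly_cubic)
  then show "\<exists>G2 G3. homogeneous_poly_map 2 G2 \<and> homogeneous_poly_map 3 G3 \<and> (\<forall>y. g y = G2 y + G3 y)"
    using g by (intro exI conjI allI) (auto simp: vec_eq_iff)
next
  assume "\<exists>G2 G3. homogeneous_poly_map 2 G2 \<and> homogeneous_poly_map 3 G3 \<and> (\<forall>y. g y = G2 y + G3 y)"
  then obtain G2 G3 where G: "\<And>i. homogeneous_poly 2 (\<lambda>y. G2 y $ i)" "\<And>i. homogeneous_poly 3 (\<lambda>y. G3 y $ i)"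
    and g: "\<And>y. g y = G2 y + G3 y"
    unfolding homogeneous_poly_map_def by blast
  from G(1) have "\<forall>i. \<exists>c. \<forall>y. G2 y $ i = (\<Sum>a\<in>UNIV. \<Sum>b\<in>UNIV. c a b * y$a * y$b)"
    using homogeneous_poly_2_coeffs by blast
  from choice[OF this] obtain c2 where c2: "\<forall>i y. G2 y $ i = (\<Sum>a\<in>UNIV. \<Sum>b\<in>UNIV. c2 i a b * y$a * y$b)"
    by blast
  from G(2) have "\<forall>i. \<exists>c. \<forall>y. G3 y $ i = (\<Sum>a\<in>UNIV. \<Sum>b\<in>UNIV. \<Sum>d\<in>UNIV. c a b d * y$a * y$b * y$d)"
    using homogeneous_poly_3_coeffs by blast
  from choice[OF this] obtain c3 where c3: "\<forall>i y. G3 y $ i = (\<Sum>a\<in>UNIV. \<Sum>b\<in>UNIV. \<Sum>d\<in>UNIV. c3 i a b d * y$a * y$b * y$d)"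
    by blast
  show "poly_deg23 g"
    unfolding poly_deg23_def by (intro exI[of _ c2] exI[of _ c3]) (simp add: g vec_eq_iff c2 c3)
qed

lemma sum_scaleR_axis:
  "(\<Sum>a\<in>UNIV. c * axis k 1 $ a * h a) = c * (h k :: real)"
proof -
  have "c * axis k 1 $ a * h a = (if a = k then c * h k else 0)" for a
    by (simp add: axis_def)
  then show ?thesis by simp
qed

lemma sum_mult_axis: "(\<Sum>a\<in>UNIV. f a * axis i 1 $ a) = (f i :: real)"
proof -
  have "f a * axis i 1 $ a = (if a = i then f i else 0)" for a
    by (simp add: axis_def)
  then show ?thesis by simp
qed

lemma homogeneous_poly_split_coord:
  fixes f :: "real^'n::finite \<Rightarrow> real"
  assumes "homogeneous_poly (Suc n) f"
  obtains Q where "\<And>j. homogeneous_poly n (Q j)"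
    "\<And>y. f y = f (y$k *\<^sub>R axis k 1) + (\<Sum>j\<in>UNIV - {k}. y$j * Q j y)"
  using assms
proof (induction n arbitrary: f thesis)
  case n: (0 f)
  obtain F where F: "\<And>a. homogeneous_poly 0 (F a)" and f: "\<And>y. f y = (\<Sum>a\<in>UNIV. y$a * F a y)"
    using homogeneous_poly_Suc_decompose[OF n.prems(2)] by blast
  have "f y = f (y$k *\<^sub>R axis k 1) + (\<Sum>j\<in>UNIV - {k}. y$j * F j y)" for y
  proof -
    have "f y = y$k * F k y + (\<Sum>j\<in>UNIV - {k}. y$j * F j y)"
      by (simp add: f sum.remove[of UNIV k])
    moreover have "f (y$k *\<^sub>R axis k 1) = y$k * F k (y$k *\<^sub>R axis k 1)"
      by (simp add: f sum_scaleR_axis)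
    ultimately show ?thesis
      using homogeneous_poly_0_const[OF F, of k y] homogeneous_poly_0_const[OF F, of k "y$k *\<^sub>R axis k 1"]
      by simp
  qed
  with F show ?case by (rule n.prems(1))
next
  case n: (Suc n f)
  obtain F where F: "\<And>a. homogeneous_poly (Suc n) (F a)"
    and f: "\<And>y. f y = (\<Sum>a\<in>UNIV. y$a * F a y)"
    using homogeneous_poly_Suc_decompose[OF n.prems(2)] by blast
  obtain Q where Q: "\<And>j. homogeneous_poly n (Q j)"
    and Fk: "\<And>y. F k y = F k (y$k *\<^sub>R axis k 1) + (\<Sum>j\<in>UNIV - {k}. y$j * Q j y)"
    using n.IH[OF _ F] by blast
  have "homogeneous_poly (Suc n) (\<lambda>y. F j y + y$k * Q j y)" for j
    using homogeneous_poly.add[OF F homogeneous_poly.coord_mult[OF Q]] .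
  moreover have "f y = f (y$k *\<^sub>R axis k 1) + (\<Sum>j\<in>UNIV - {k}. y$j * (F j y + y$k * Q j y))" for y
  proof -
    have "f y = y$k * F k y + (\<Sum>j\<in>UNIV - {k}. y$j * F j y)"
      by (simp add: f sum.remove[of UNIV k])
    moreover have "f (y$k *\<^sub>R axis k 1) = y$k * F k (y$k *\<^sub>R axis k 1)"
      by (simp add: f sum_scaleR_axis)
    ultimately show ?thesis
      by (subst (asm) Fk) (simp add: algebra_simps sum.distrib sum_distrib_left)
  qed
  ultimately show ?case by (rule n.prems(1))
qed

section \<open>Diagonal quadratic, trilinear and quadrilinear forms\<close>

definition diag_form :: "('n::finite \<Rightarrow> real) \<Rightarrow> real^'n \<Rightarrow> real^'n \<Rightarrow> real" where
  "diag_form l x y = (\<Sum>p\<in>UNIV. l p * x$p * y$p)"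

definition form3 :: "('n::finite \<Rightarrow> 'n \<Rightarrow> 'n \<Rightarrow> real) \<Rightarrow> real^'n \<Rightarrow> real^'n \<Rightarrow> real^'n \<Rightarrow> real" where
  "form3 t x y z = (\<Sum>a\<in>UNIV. \<Sum>b\<in>UNIV. \<Sum>c\<in>UNIV. t a b c * x$a * y$b * z$c)"

definition form4 :: "('n::finite \<Rightarrow> 'n \<Rightarrow> 'n \<Rightarrow> 'n \<Rightarrow> real) \<Rightarrow>
    real^'n \<Rightarrow> real^'n \<Rightarrow> real^'n \<Rightarrow> real^'n \<Rightarrow> real" where
  "form4 t w x y z = (\<Sum>a\<in>UNIV. \<Sum>b\<in>UNIV. \<Sum>c\<in>UNIV. \<Sum>d\<in>UNIV. t a b c d * w$a * x$b * y$c * z$d)"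

lemma diag_form_add [simp]:
  "diag_form l (x + x') y = diag_form l x y + diag_form l x' y"
  "diag_form l x (y + y') = diag_form l x y + diag_form l x y'"
  by (simp_all add: diag_form_def algebra_simps sum.distrib)

lemma diag_form_commute: "diag_form l x y = diag_form l y x"
  by (simp add: diag_form_def mult_ac)

lemma diag_form_scaleR [simp]:
  "diag_form l (c *\<^sub>R x) y = c * diag_form l x y" "diag_form l x (c *\<^sub>R y) = c * diag_form l x y"
  by (simp_all add: diag_form_def sum_distrib_left mult_ac)

lemma form3_add [simp]:
  "form3 t (x + x') y z = form3 t x y z + form3 t x' y z"
  "form3 t x (y + y') z = form3 t x y z + form3 t x y' z"
  "form3 t x y (z + z') = form3 t x y z + form3 t x y z'"
  by (simp_all add: form3_def algebra_simps sum.distrib)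

lemma form3_swap12: "form3 t x y z = form3 (\<lambda>a b c. t b a c) y x z"
  unfolding form3_def by (subst sum.swap) (simp add: mult_ac)

lemma form3_swap13: "form3 t x y z = form3 (\<lambda>a b c. t c b a) z y x"
  unfolding form3_def by (subst sum.swap) (subst (2) sum.swap, subst sum.swap, simp add: mult_ac)

lemma form3_axis_axis: "form3 t x (axis b 1) (axis c 1) = (\<Sum>a\<in>UNIV. t a b c * x$a)"
  by (simp add: form3_def sum_mult_axis)

lemma form4_add [simp]:
  "form4 t (w + w') x y z = form4 t w x y z + form4 t w' x y z"
  "form4 t w (x + x') y z = form4 t w x y z + form4 t w x' y z"
  "form4 t w x (y + y') z = form4 t w x y z + form4 t w x y' z"
  "form4 t w x y (z + z') = form4 t w x y z + form4 t w x y z'"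
  by (simp_all add: form4_def algebra_simps sum.distrib)

lemma form4_axis [simp]: "form4 t (axis a 1) (axis b 1) (axis c 1) (axis d 1) = t a b c d"
  by (simp add: form4_def sum_mult_axis)

lemma homogeneous_poly_map_id: "homogeneous_poly_map 1 (\<lambda>y. y)"
  unfolding homogeneous_poly_map_def using homogeneous_poly_coord by blast

lemma homogeneous_poly_diag_form:
  assumes "homogeneous_poly_map p a" "homogeneous_poly_map q b" "p + q = n"
  shows "homogeneous_poly n (\<lambda>y. diag_form l (a y) (b y))"
  using assms unfolding homogeneous_poly_map_def diag_form_def
  by (auto intro!: homogeneous_poly_sum homogeneous_poly_mult[of p _ q, simplified]
      homogeneous_poly_scale)

lemma homogeneous_poly_form3:
  assumes "homogeneous_poly_map p a" "homogeneous_poly_map q b" "homogeneous_poly_map r c" "p + q + r = n"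
  shows "homogeneous_poly n (\<lambda>y. form3 t (a y) (b y) (c y))"
  using assms unfolding homogeneous_poly_map_def form3_def
  by (auto intro!: homogeneous_poly_sum homogeneous_poly_mult[of "p + q" _ r, simplified]
      homogeneous_poly_mult[of p _ q, simplified] homogeneous_poly_scale)

lemma homogeneous_poly_form4:
  assumes "homogeneous_poly_map p a" "homogeneous_poly_map q b" "homogeneous_poly_map r c"
    "homogeneous_poly_map s d" "p + q + r + s = n"
  shows "homogeneous_poly n (\<lambda>y. form4 t (a y) (b y) (c y) (d y))"
  using assms unfolding homogeneous_poly_map_def form4_def
  by (auto intro!: homogeneous_poly_sum homogeneous_poly_mult[of "p + q + r" _ s, simplified]
      homogeneous_poly_mult[of "p + q" _ r, simplified]
      homogeneous_poly_mult[of p _ q, simplified] homogeneous_poly_scale)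

lemma abs_diag_form_le: "\<bar>diag_form l x y\<bar> \<le> (\<Sum>p\<in>UNIV. \<bar>l p\<bar>) * (norm x * norm y)"
proof -
  have "\<bar>l p * x$p * y$p\<bar> \<le> \<bar>l p\<bar> * (norm x * norm y)" for p
    unfolding abs_mult mult.assoc by (intro mult_left_mono mult_mono component_le_norm_cart) auto
  then have "\<bar>diag_form l x y\<bar> \<le> (\<Sum>p\<in>UNIV. \<bar>l p\<bar> * (norm x * norm y))"
    unfolding diag_form_def by (intro order_trans[OF sum_abs sum_mono])
  then show ?thesis by (simp add: sum_distrib_right)
qed

lemma abs_form3_le:
  "\<bar>form3 t x y z\<bar> \<le> (\<Sum>a\<in>UNIV. \<Sum>b\<in>UNIV. \<Sum>c\<in>UNIV. \<bar>t a b c\<bar>) * (norm x * norm y * norm z)"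
proof -
  have "\<bar>t a b c * x$a * y$b * z$c\<bar> \<le> \<bar>t a b c\<bar> * (norm x * norm y * norm z)" for a b c
    unfolding abs_mult mult.assoc by (intro mult_left_mono mult_mono component_le_norm_cart) auto
  then have "\<bar>form3 t x y z\<bar> \<le> (\<Sum>a\<in>UNIV. \<Sum>b\<in>UNIV. \<Sum>c\<in>UNIV. \<bar>t a b c\<bar> * (norm x * norm y * norm z))"
    unfolding form3_def by (intro order_trans[OF sum_abs sum_mono])
  then show ?thesis by (simp add: sum_distrib_right)
qed

lemma abs_form4_le:
  "\<bar>form4 t w x y z\<bar> \<le> (\<Sum>a\<in>UNIV. \<Sum>b\<in>UNIV. \<Sum>c\<in>UNIV. \<Sum>d\<in>UNIV. \<bar>t a b c d\<bar>)
     * (norm w * norm x * norm y * norm z)"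
proof -
  have "\<bar>t a b c d * w$a * x$b * y$c * z$d\<bar> \<le> \<bar>t a b c d\<bar> * (norm w * norm x * norm y * norm z)" for a b c d
    unfolding abs_mult mult.assoc by (intro mult_left_mono mult_mono component_le_norm_cart) auto
  then have "\<bar>form4 t w x y z\<bar> \<le> (\<Sum>a\<in>UNIV. \<Sum>b\<in>UNIV. \<Sum>c\<in>UNIV. \<Sum>d\<in>UNIV.
      \<bar>t a b c d\<bar> * (norm w * norm x * norm y * norm z))"
    unfolding form4_def by (intro order_trans[OF sum_abs sum_mono])
  then show ?thesis by (simp add: sum_distrib_right)
qed

lemma diag_form_bigo:
  fixes a b :: "'x::real_normed_vector \<Rightarrow> real^'n::finite"
  assumes "(\<lambda>y. norm (a y)) \<in> O[F](\<lambda>y. norm y ^ p)" "(\<lambda>y. norm (b y)) \<in> O[F](\<lambda>y. norm y ^ q)"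
    "p + q = n"
  shows "(\<lambda>y. diag_form l (a y) (b y)) \<in> O[F](\<lambda>y. norm y ^ n)"
proof -
  have "(\<lambda>y. diag_form l (a y) (b y)) \<in> O[F](\<lambda>y. norm (a y) * norm (b y))"
    by (intro bigoI[of _ "\<Sum>p\<in>UNIV. \<bar>l p\<bar>"] always_eventually allI) (simp add: abs_diag_form_le)
  moreover have "(\<lambda>y. norm (a y) * norm (b y)) \<in> O[F](\<lambda>y. norm y ^ p * norm y ^ q)"
    by (rule landau_o.big.mult[OF assms(1,2)])
  ultimately show ?thesis by (simp add: power_add landau_o.big_trans flip: assms(3))
qed

lemma form3_bigo:
  fixes a b c :: "'x::real_normed_vector \<Rightarrow> real^'n::finite"
  assumes "(\<lambda>y. norm (a y)) \<in> O[F](\<lambda>y. norm y ^ p)" "(\<lambda>y. norm (b y)) \<in> O[F](\<lambda>y. norm y ^ q)"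
    "(\<lambda>y. norm (c y)) \<in> O[F](\<lambda>y. norm y ^ r)" "p + q + r = n"
  shows "(\<lambda>y. form3 t (a y) (b y) (c y)) \<in> O[F](\<lambda>y. norm y ^ n)"
proof -
  have "(\<lambda>y. form3 t (a y) (b y) (c y)) \<in> O[F](\<lambda>y. norm (a y) * norm (b y) * norm (c y))"
    by (intro bigoI[of _ "\<Sum>a\<in>UNIV. \<Sum>b\<in>UNIV. \<Sum>c\<in>UNIV. \<bar>t a b c\<bar>"] always_eventually allI)
      (simp add: abs_form3_le)
  moreover have "(\<lambda>y. norm (a y) * norm (b y) * norm (c y)) \<in> O[F](\<lambda>y. norm y ^ p * norm y ^ q * norm y ^ r)"
    by (intro landau_o.big.mult assms(1-3))
  ultimately show ?thesis by (simp add: power_add landau_o.big_trans flip: assms(4))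
qed

lemma form4_bigo:
  fixes a b c d :: "'x::real_normed_vector \<Rightarrow> real^'n::finite"
  assumes "(\<lambda>y. norm (a y)) \<in> O[F](\<lambda>y. norm y ^ p)" "(\<lambda>y. norm (b y)) \<in> O[F](\<lambda>y. norm y ^ q)"
    "(\<lambda>y. norm (c y)) \<in> O[F](\<lambda>y. norm y ^ r)" "(\<lambda>y. norm (d y)) \<in> O[F](\<lambda>y. norm y ^ s)"
    "p + q + r + s = n"
  shows "(\<lambda>y. form4 t (a y) (b y) (c y) (d y)) \<in> O[F](\<lambda>y. norm y ^ n)"
proof -
  have "(\<lambda>y. form4 t (a y) (b y) (c y) (d y)) \<in> O[F](\<lambda>y. norm (a y) * norm (b y) * norm (c y) * norm (d y))"
    by (intro bigoI[of _ "\<Sum>a\<in>UNIV. \<Sum>b\<in>UNIV. \<Sum>c\<in>UNIV. \<Sum>d\<in>UNIV. \<bar>t a b c d\<bar>"]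
        always_eventually allI) (simp add: abs_form4_le)
  moreover have "(\<lambda>y. norm (a y) * norm (b y) * norm (c y) * norm (d y))
      \<in> O[F](\<lambda>y. norm y ^ p * norm y ^ q * norm y ^ r * norm y ^ s)"
    by (intro landau_o.big.mult assms(1-4))
  ultimately show ?thesis by (simp add: power_add landau_o.big_trans flip: assms(5))
qed

section \<open>Reduction to the normal form\<close>

text \<open>For \<open>j = k\<close> the component \<open>- Q k y / lam k\<close> is \<open>- Q k y / 0 = 0\<close>; this is harmless as \<open>lam k = 0\<close>.\<close>

lemma diag_form_absorb:
  assumes "lam k = 0" "\<And>j. j \<noteq> k \<Longrightarrow> lam j \<noteq> 0"
  shows "diag_form lam y (\<chi> j. - Q j y / lam j) = - (\<Sum>j\<in>UNIV - {k}. y$j * Q j y)"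
proof -
  have "(\<Sum>j\<in>UNIV - {k}. lam j * y$j * (- Q j y / lam j)) = (\<Sum>j\<in>UNIV - {k}. - (y$j * Q j y))"
    using assms(2) by (intro sum.cong) auto
  then show ?thesis
    by (simp add: diag_form_def sum.remove[of UNIV k] assms(1) sum_negf)
qed

lemma homogeneous_poly_absorb:
  fixes f :: "real^'n::finite \<Rightarrow> real"
  assumes "homogeneous_poly (Suc n) f" "lam k = 0" "\<And>j. j \<noteq> k \<Longrightarrow> lam j \<noteq> 0"
  obtains G where "homogeneous_poly_map n G"
    "\<And>y. f y + diag_form lam y (G y) = f (axis k 1) * (y$k) ^ Suc n"
proof -
  obtain Q where Q: "\<And>j. homogeneous_poly n (Q j)"
    and f: "\<And>y. f y = f (y$k *\<^sub>R axis k 1) + (\<Sum>j\<in>UNIV - {k}. y$j * Q j y)"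
    using homogeneous_poly_split_coord[OF assms(1)] by blast
  have "homogeneous_poly n (\<lambda>y. - Q j y / lam j)" for j
    using homogeneous_poly_scale[OF Q, of "- 1 / lam j" j] by simp
  then have "homogeneous_poly_map n (\<lambda>y. \<chi> j. - Q j y / lam j)"
    by (simp add: homogeneous_poly_map_def)
  moreover have "f y + diag_form lam y (\<chi> j. - Q j y / lam j) = f (axis k 1) * (y$k) ^ Suc n" for y
    using f[of y] homogeneous_poly_scaleR[OF assms(1), of "y$k" "axis k 1"]
      diag_form_absorb[of lam k y Q] assms(2,3)
    by simp
  ultimately show ?thesis by (rule that)
qed

lemma form3_split_coord:
  "form3 t y y y = t k k k * (y$k) ^ 3 + (\<Sum>j\<in>UNIV - {k}. y$j *
     ((\<Sum>b\<in>UNIV. \<Sum>c\<in>UNIV. t j b c * y$b * y$c) + y$k * (\<Sum>c\<in>UNIV. t k j c * y$c) + y$k * y$k * t k k j))"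
proof -
  have "form3 t y y y = (\<Sum>a\<in>UNIV. y$a * (\<Sum>b\<in>UNIV. y$b * (\<Sum>c\<in>UNIV. y$c * t a b c)))"
    by (simp add: form3_def sum_distrib_left mult_ac)
  also have "\<dots> = y$k * (\<Sum>b\<in>UNIV. y$b * (\<Sum>c\<in>UNIV. y$c * t k b c))
      + (\<Sum>j\<in>UNIV - {k}. y$j * (\<Sum>b\<in>UNIV. y$b * (\<Sum>c\<in>UNIV. y$c * t j b c)))"
    by (simp add: sum.remove[of UNIV k])
  also have "(\<Sum>b\<in>UNIV. y$b * (\<Sum>c\<in>UNIV. y$c * t k b c))
      = y$k * (\<Sum>c\<in>UNIV. y$c * t k k c) + (\<Sum>j\<in>UNIV - {k}. y$j * (\<Sum>c\<in>UNIV. y$c * t k j c))"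
    by (simp add: sum.remove[of UNIV k])
  also have "(\<Sum>c\<in>UNIV. y$c * t k k c) = y$k * t k k k + (\<Sum>j\<in>UNIV - {k}. y$j * t k k j)"
    by (simp add: sum.remove[of UNIV k])
  finally show ?thesis
    by (simp add: algebra_simps sum.distrib sum_distrib_left power3_eq_cube)
qed

lemma form3_absorb:
  assumes "lam k = 0" "\<And>j. j \<noteq> k \<Longrightarrow> lam j \<noteq> 0"
  obtains G where "homogeneous_poly_map 2 G"
    "\<And>y. form3 t y y y + diag_form lam y (G y) = t k k k * (y$k) ^ 3"
    "\<And>j. G (axis k 1) $ j = - (t j k k + t k j k + t k k j) / lam j"
proof -
  define S where "S j y = (\<Sum>b\<in>UNIV. \<Sum>c\<in>UNIV. t j b c * y$b * y$c)
    + y$k * (\<Sum>c\<in>UNIV. t k j c * y$c) + y$k * y$k * t k k j" for j y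
  have "homogeneous_poly 2 (S j)" for j
  proof -
    have "homogeneous_poly 2 (\<lambda>y. y$k * (\<Sum>c\<in>UNIV. t k j c * y$c))"
      using homogeneous_poly_mult[OF homogeneous_poly_coord homogeneous_poly_linear]
      by (simp add: numeral_2_eq_2)
    moreover have "homogeneous_poly 2 (\<lambda>y. y$k * y$k * t k k j)"
      using homogeneous_poly_mult[OF homogeneous_poly_mult[OF homogeneous_poly_coord homogeneous_poly_coord]
          homogeneous_poly.const] by (simp add: numeral_2_eq_2)
    ultimately show ?thesis
      unfolding S_def by (intro homogeneous_poly.add homogeneous_poly_quadratic)
  qed
  then have "homogeneous_poly_map 2 (\<lambda>y. \<chi> j. - S j y / lam j)"
    using homogeneous_poly_scale[of 2 "S _" "- 1 / lam _"] by (simp add: homogeneous_poly_map_def)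
  moreover have "form3 t y y y + diag_form lam y (\<chi> j. - S j y / lam j) = t k k k * (y$k) ^ 3" for y
    using form3_split_coord[of t y k] diag_form_absorb[of lam k y S] assms by (simp add: S_def)
  moreover have "(\<chi> j. - S j (axis k 1) / lam j) $ j = - (t j k k + t k j k + t k k j) / lam j" for j
    by (simp add: S_def sum_mult_axis)
  ultimately show ?thesis by (rule that)
qed

lemma deg23_shift_bigo:
  assumes G2: "homogeneous_poly_map 2 G2" and G3: "homogeneous_poly_map 3 G3"
  shows "(\<lambda>y. norm (G2 y + G3 y)) \<in> O[at 0](\<lambda>y. norm y ^ 2)"
    and "(\<lambda>y. norm (y + (G2 y + G3 y))) \<in> O[at 0](\<lambda>y. norm y ^ 1)"
proof -
  show h: "(\<lambda>y. norm (G2 y + G3 y)) \<in> O[at 0](\<lambda>y. norm y ^ 2)"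
    using homogeneous_poly_map_bigo[OF G2]
      landau_o.big_trans[OF homogeneous_poly_map_bigo[OF G3] norm_pow_bigo_at_0[of 2 3]]
    by (intro bigo_norm_add) simp_all
  show "(\<lambda>y. norm (y + (G2 y + G3 y))) \<in> O[at 0](\<lambda>y. norm y ^ 1)"
    by (rule bigo_norm_add[OF _ landau_o.big_trans[OF h norm_pow_bigo_at_0[of 1 2]]]) simp_all
qed

definition taylor_poly4 :: "('n::finite \<Rightarrow> real) \<Rightarrow> ('n \<Rightarrow> 'n \<Rightarrow> 'n \<Rightarrow> real) \<Rightarrow>
    ('n \<Rightarrow> 'n \<Rightarrow> 'n \<Rightarrow> 'n \<Rightarrow> real) \<Rightarrow> real^'n \<Rightarrow> real" where
  "taylor_poly4 lam t3 t4 x = diag_form lam x x / 2 + form3 t3 x x x / 6 + form4 t4 x x x x / 24"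

lemma taylor_poly4_shift:
  fixes G2 G3 :: "real^'n::finite \<Rightarrow> real^'n"
  assumes G2: "homogeneous_poly_map 2 G2" and G3: "homogeneous_poly_map 3 G3"
  shows "(\<lambda>y. taylor_poly4 lam t3 t4 (y + G2 y + G3 y)
      - (diag_form lam y y / 2
         + (form3 t3 y y y / 6 + diag_form lam y (G2 y))
         + (form4 t4 y y y y / 24
            + (form3 t3 (G2 y) y y + form3 t3 y (G2 y) y + form3 t3 y y (G2 y)) / 6
            + diag_form lam (G2 y) (G2 y) / 2 + diag_form lam y (G3 y))))
    \<in> O[at 0](\<lambda>y. norm y ^ 5)"
proof -
  define h where "h y = G2 y + G3 y" for y
  \<comment> \<open>\<open>R\<close> collects the terms of degree at least 5 in \<open>y\<close>.\<close>
  define R where "R y = diag_form lam (G2 y) (G3 y) + diag_form lam (G3 y) (G3 y) / 2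
      + (form3 t3 (G3 y) y y + form3 t3 y (G3 y) y + form3 t3 y y (G3 y)) / 6
      + (form3 t3 (h y) (h y) y + form3 t3 (h y) y (h y) + form3 t3 y (h y) (h y)
         + form3 t3 (h y) (h y) (h y)) / 6
      + (form4 t4 (h y) (y + h y) (y + h y) (y + h y) + form4 t4 y (h y) (y + h y) (y + h y)
         + form4 t4 y y (h y) (y + h y) + form4 t4 y y y (h y)) / 24" for y
  have "taylor_poly4 lam t3 t4 (y + G2 y + G3 y)
      - (diag_form lam y y / 2
         + (form3 t3 y y y / 6 + diag_form lam y (G2 y))
         + (form4 t4 y y y y / 24
            + (form3 t3 (G2 y) y y + form3 t3 y (G2 y) y + form3 t3 y y (G2 y)) / 6
            + diag_form lam (G2 y) (G2 y) / 2 + diag_form lam y (G3 y)))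
    = R y" for y
    by (simp add: taylor_poly4_def R_def h_def field_simps diag_form_commute[of lam "G3 y" "G2 y"]
        diag_form_commute[of lam "G2 y" y] diag_form_commute[of lam "G3 y" y])
  moreover have "R \<in> O[at 0](\<lambda>y. norm y ^ 5)"
  proof -
    have y: "(\<lambda>y. norm y) \<in> O[at 0](\<lambda>y. norm y ^ 1)" by simp
    have g2: "(\<lambda>y. norm (G2 y)) \<in> O[at 0](\<lambda>y. norm y ^ 2)"
      using G2 by (rule homogeneous_poly_map_bigo)
    have g3: "(\<lambda>y. norm (G3 y)) \<in> O[at 0](\<lambda>y. norm y ^ 3)"
      using G3 by (rule homogeneous_poly_map_bigo)
    note h = deg23_shift_bigo(1)[OF G2 G3, folded h_def]
    note yh = deg23_shift_bigo(2)[OF G2 G3, folded h_def]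
    have "(\<lambda>y. diag_form lam (G3 y) (G3 y)) \<in> O[at 0](\<lambda>y. norm y ^ 5)"
      and "(\<lambda>y. form3 t3 (h y) (h y) (h y)) \<in> O[at 0](\<lambda>y. norm y ^ 5)"
      by (rule landau_o.big_trans[OF diag_form_bigo[OF g3 g3 refl] norm_pow_bigo_at_0], simp)
        (rule landau_o.big_trans[OF form3_bigo[OF h h h refl] norm_pow_bigo_at_0], simp)
    then show ?thesis
      unfolding R_def
      by (intro sum_in_bigo(1) bigo_divide_const diag_form_bigo[OF g2 g3]
          form3_bigo[OF g3 y y] form3_bigo[OF y g3 y] form3_bigo[OF y y g3]
          form3_bigo[OF h h y] form3_bigo[OF h y h] form3_bigo[OF y h h]
          form4_bigo[OF h yh yh yh] form4_bigo[OF y h yh yh] form4_bigo[OF y y h yh] form4_bigo[OF y y y h])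
        simp_all
  qed
  ultimately show ?thesis by simp
qed

lemma quartic_coefficient_at_axis:
  assumes lamk: "lam k = 0" and sym: "\<And>j. t3 j k k = t3 k k j" "\<And>j. t3 k j k = t3 k k j"
    and v: "\<And>j. v $ j = - t3 k k j / (2 * lam j)"
  shows "form4 t4 (axis k 1) (axis k 1) (axis k 1) (axis k 1) / 24
      + (form3 t3 v (axis k 1) (axis k 1) + form3 t3 (axis k 1) v (axis k 1) + form3 t3 (axis k 1) (axis k 1) v) / 6
      + diag_form lam v v / 2
    = (1/24) * t4 k k k k - (1/2) * (\<Sum>j\<in>UNIV - {k}. ((1/2) * t3 k k j)^2 / lam j)"
proof -
  define W where "W = (\<Sum>j\<in>UNIV. (t3 k k j)^2 / lam j)"
  have "form3 t3 v (axis k 1) (axis k 1) = - W / 2"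
    and "form3 t3 (axis k 1) v (axis k 1) = - W / 2"
    and "form3 t3 (axis k 1) (axis k 1) v = - W / 2"
    using sym by (simp_all add: form3_swap12[of _ "axis k 1" v] form3_swap13[of _ _ _ v] form3_axis_axis v
        W_def sum_divide_distrib power2_eq_square sum_negf mult_ac)
  moreover have "diag_form lam v v = W / 4"
    unfolding diag_form_def W_def sum_divide_distrib
    by (intro sum.cong refl) (simp add: v power2_eq_square)
  moreover have "(\<Sum>j\<in>UNIV - {k}. ((1/2) * t3 k k j)^2 / lam j) = W / 4"
    by (simp add: W_def sum.remove[of UNIV k] lamk power_divide sum_divide_distrib mult_ac)
  ultimately show ?thesis by simp
qed

lemma taylor_poly4_normal_form:
  fixes lam :: "'n::finite \<Rightarrow> real" and k :: 'n
  assumes lamk: "lam k = 0" and lam_nz: "\<And>j. j \<noteq> k \<Longrightarrow> lam j \<noteq> 0"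
    and sym: "\<And>j. t3 j k k = t3 k k j" "\<And>j. t3 k j k = t3 k k j"
  obtains G2 G3 where "homogeneous_poly_map 2 G2" "homogeneous_poly_map 3 G3"
    "(\<lambda>y. taylor_poly4 lam t3 t4 (y + G2 y + G3 y) -
        ((1/2) * (\<Sum>i\<in>UNIV - {k}. lam i * (y$i)^2) + ((1/6) * t3 k k k) * (y$k)^3
         + ((1/24) * t4 k k k k - (1/2) * (\<Sum>j\<in>UNIV - {k}. ((1/2) * t3 k k j)^2 / lam j)) * (y$k)^4))
     \<in> O[at 0](\<lambda>y. norm y ^ 5)"
proof -
  obtain G where G: "homogeneous_poly_map 2 G"
    and cubic: "\<And>y. form3 t3 y y y + diag_form lam y (G y) = t3 k k k * (y$k) ^ 3"
    and G_axis: "\<And>j. G (axis k 1) $ j = - (t3 j k k + t3 k j k + t3 k k j) / lam j"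
    using form3_absorb[of lam k t3, OF lamk lam_nz] by blast
  define G2 where "G2 y = (1/6) *\<^sub>R G y" for y
  have G2: "homogeneous_poly_map 2 G2"
    using G unfolding G2_def homogeneous_poly_map_def by (simp add: homogeneous_poly_divide)
  have cubic2: "form3 t3 y y y / 6 + diag_form lam y (G2 y) = t3 k k k / 6 * (y$k) ^ 3" for y
    using cubic[of y] by (simp add: G2_def)
  define f4 where "f4 y = form4 t4 y y y y / 24
      + (form3 t3 (G2 y) y y + form3 t3 y (G2 y) y + form3 t3 y y (G2 y)) / 6
      + diag_form lam (G2 y) (G2 y) / 2" for y
  have "homogeneous_poly 4 f4"
    unfolding f4_def using G2 homogeneous_poly_map_id
    by (intro homogeneous_poly.add homogeneous_poly_divide homogeneous_poly_form4 homogeneous_poly_form3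
        homogeneous_poly_diag_form) auto
  then obtain G3 where G3: "homogeneous_poly_map 3 G3"
    and quartic: "\<And>y. f4 y + diag_form lam y (G3 y) = f4 (axis k 1) * (y$k) ^ 4"
    using homogeneous_poly_absorb[of 3 f4 lam k, OF _ lamk lam_nz] by (auto simp: numeral_eq_Suc)
  have "G2 (axis k 1) $ j = - t3 k k j / (2 * lam j)" for j
    by (simp add: G2_def G_axis sym)
  from quartic_coefficient_at_axis[OF lamk sym this]
  have "f4 (axis k 1) = (1/24) * t4 k k k k - (1/2) * (\<Sum>j\<in>UNIV - {k}. ((1/2) * t3 k k j)^2 / lam j)"
    by (simp add: f4_def)
  moreover have "(\<Sum>i\<in>UNIV - {k}. lam i * (y$i)^2) = diag_form lam y y" for y
    by (simp add: diag_form_def sum.remove[of UNIV k] lamk power2_eq_square mult.assoc)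
  ultimately have "(1/2) * (\<Sum>i\<in>UNIV - {k}. lam i * (y$i)^2) + ((1/6) * t3 k k k) * (y$k)^3
         + ((1/24) * t4 k k k k - (1/2) * (\<Sum>j\<in>UNIV - {k}. ((1/2) * t3 k k j)^2 / lam j)) * (y$k)^4
      = diag_form lam y y / 2 + (form3 t3 y y y / 6 + diag_form lam y (G2 y))
        + (f4 y + diag_form lam y (G3 y))" for y
    by (simp add: cubic2 quartic)
  then show ?thesis
    using that[OF G2 G3] taylor_poly4_shift[OF G2 G3, of lam t3 t4] by (simp add: f4_def add.assoc)
qed

lemma third_partials_commute:
  fixes V :: "real^'n::finite \<Rightarrow> real"
  assumes "C_k 3 V"
  shows "partial k (partial k (partial j V)) x = partial j (partial k (partial k V)) x"
    and "partial k (partial j (partial k V)) x = partial j (partial k (partial k V)) x"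
proof -
  have "C_k (Suc 2) V" using assms by simp
  then have C2: "C_k 2 V" "C_k 2 (partial k V)"
    using C_k_mono[of 2 "Suc 2"] unfolding C_k.simps(2) by auto
  show "partial k (partial j (partial k V)) x = partial j (partial k (partial k V)) x"
    by (rule partial_commute[OF C2(2)])
  moreover have "partial k (partial j V) = partial j (partial k V)"
    using partial_commute[OF C2(1)] by blast
  ultimately show "partial k (partial k (partial j V)) x = partial j (partial k (partial k V)) x"
    by simp
qed

lemma critical_point_taylor_poly4:
  fixes V :: "real^'n::finite \<Rightarrow> real"
  assumes "C_k 4 V" "V 0 = 0" "\<forall>i. partial i V 0 = 0"
    and "\<forall>i j. partial i (partial j V) 0 = (if i = j then lam i else 0)"
  shows "(\<lambda>x. V x - taylor_poly4 lam (\<lambda>a b c. partial c (partial b (partial a V)) 0)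
      (\<lambda>a b c d. partial d (partial c (partial b (partial a V))) 0) x) \<in> o[nhds 0](\<lambda>x. norm x ^ 4)"
proof -
  have "partial q (partial p V) 0 * x$q = (if q = p then lam p * x$p else 0)" for p q x
    using assms(4) by simp
  then have "iterated_dir_deriv x 2 V 0 = diag_form lam x x" for x
    by (simp add: numeral_2_eq_2 diag_form_def mult_ac)
  moreover have "iterated_dir_deriv x 3 V 0 = form3 (\<lambda>a b c. partial c (partial b (partial a V)) 0) x x x" for x
    by (simp add: numeral_3_eq_3 form3_def sum_distrib_left sum_distrib_right mult_ac)
  moreover have "iterated_dir_deriv x 4 V 0
      = form4 (\<lambda>a b c d. partial d (partial c (partial b (partial a V))) 0) x x x x" for x
    by (simp add: eval_nat_numeral form4_def sum_distrib_left sum_distrib_right mult_ac)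
  moreover have "{..4::nat} = {0, 1, 2, 3, 4}" by auto
  ultimately have "(\<Sum>m\<le>4. iterated_dir_deriv x m V 0 / fact m)
      = taylor_poly4 lam (\<lambda>a b c. partial c (partial b (partial a V)) 0)
          (\<lambda>a b c d. partial d (partial c (partial b (partial a V))) 0) x" for x
    using assms(2,3) by (simp add: taylor_poly4_def fact_numeral)
  then show ?thesis using taylor_smallo[OF assms(1)] by simp
qed

theorem proposition2p8:
  fixes V :: "real^'n \<Rightarrow> real" and k :: 'n and lam :: "'n \<Rightarrow> real"
  assumes C4: "C_k 4 V"
    and V0: "V 0 = 0"
    and stat: "\<forall>i. partial i V 0 = 0"
    and hess: "\<forall>i j. partial i (partial j V) 0 = (if i = j then lam i else 0)"
    and lamk: "lam k = 0"
    and j2: "\<exists>j2. j2 \<noteq> k \<and> lam j2 \<noteq> 0 \<and> (\<forall>j. j \<noteq> k \<and> j \<noteq> j2 \<longrightarrow> lam j > 0)"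
  shows "\<exists>g. poly_deg23 g \<and>
     (\<lambda>y. V (y + g y) -
        ((1/2) * (\<Sum>i\<in>UNIV - {k}. lam i * (y$i)^2)
         + ((1/6) * partial k (partial k (partial k V)) 0) * (y$k)^3
         + ((1/24) * partial k (partial k (partial k (partial k V))) 0
            - (1/2) * (\<Sum>j\<in>UNIV - {k}. ((1/2) * partial j (partial k (partial k V)) 0)^2 / lam j))
           * (y$k)^4))
     \<in> o[at 0](\<lambda>y. norm y ^ 4)"
proof -
  from j2 have lam_nz: "lam j \<noteq> 0" if "j \<noteq> k" for j
    using that by (metis less_irrefl)
  define t3 where "t3 a b c = partial c (partial b (partial a V)) 0" for a b c
  define t4 where "t4 a b c d = partial d (partial c (partial b (partial a V))) 0" for a b c d
  define P where "P y = (1/2) * (\<Sum>i\<in>UNIV - {k}. lam i * (y$i)^2) + ((1/6) * t3 k k k) * (y$k)^3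
    + ((1/24) * t4 k k k k - (1/2) * (\<Sum>j\<in>UNIV - {k}. ((1/2) * t3 k k j)^2 / lam j)) * (y$k)^4" for y
  have "C_k 3 V" using C_k_mono[OF _ C4] by simp
  then have sym: "t3 j k k = t3 k k j" "t3 k j k = t3 k k j" for j
    unfolding t3_def by (simp_all add: third_partials_commute)
  obtain G2 G3 where G2: "homogeneous_poly_map 2 G2" and G3: "homogeneous_poly_map 3 G3"
    and normal_form: "(\<lambda>y. taylor_poly4 lam t3 t4 (y + G2 y + G3 y) - P y) \<in> O[at 0](\<lambda>y. norm y ^ 5)"
    unfolding P_def using taylor_poly4_normal_form[of lam k t3, OF lamk lam_nz sym] by blast
  define g where "g y = G2 y + G3 y" for y
  have "poly_deg23 g" unfolding poly_deg23_iff g_def using G2 G3 by blast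
  have "(\<lambda>y. norm (y + g y)) \<in> O[at 0](\<lambda>y. norm y)"
    using deg23_shift_bigo(2)[OF G2 G3] by (simp add: g_def)
  with critical_point_taylor_poly4[OF C4 V0 stat hess]
  have "(\<lambda>y. V (y + g y) - taylor_poly4 lam t3 t4 (y + g y)) \<in> o[at 0](\<lambda>y. norm y ^ 4)"
    unfolding t3_def t4_def by (rule smallo_compose_at_0)
  moreover have "(\<lambda>y. taylor_poly4 lam t3 t4 (y + g y) - P y) \<in> o[at 0](\<lambda>y. norm y ^ 4)"
    using normal_form norm_pow_smallo_at_0[of 4 5] unfolding g_def add.assoc
    by (rule landau_o.big_small_trans) simp
  ultimately have "(\<lambda>y. V (y + g y) - P y) \<in> o[at 0](\<lambda>y. norm y ^ 4)"
    using sum_in_smallo(1) by fastforce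
  with \<open>poly_deg23 g\<close> show ?thesis
    unfolding P_def t3_def t4_def by blast
qed

end
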